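(* Let $T^2=\mathbb{R}^2/\mathbb{Z}^2$, let $H:T^2\to\mathrm{Sym}_3(\mathbb{R})$ be continuous with $H(-k)=H(k)$ for all $k\in T^2$, and let $i\in\{1,2,3\}$ be such that the $i$-th eigenvalue $E_i(k)$ (eigenvalues ordered $E_1(k)\le E_2(k)\le E_3(k)$) is a simple eigenvalue of $H(k)$ for every $k\in T^2$. Then the real line bundle $L_i=\{(k,v)\in T^2\times\mathbb{R}^3: H(k)v=E_i(k)v\}$ over $T^2$ is trivial; equivalently, there is a continuous map $u:T^2\to\mathbb{R}^3$ with $\|u(k)\|=1$ and $H(k)u(k)=E_i(k)u(k)$ for all $k$. *)

theory Defs
  imports "HOL-Analysis.Analysis"
begin

text \<open>The torus T^2 = R^2/Z^2 is modelled by Z^2-periodic maps on real^2.\<close>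

definition zlattice_periodic :: "(real^2 \<Rightarrow> 'b) \<Rightarrow> bool" where
  "zlattice_periodic f \<longleftrightarrow> (\<forall>k d. (\<forall>j. d $ j \<in> \<int>) \<longrightarrow> f (k + d) = f k)"

definition sorted_eigenvalues :: "real^3^3 \<Rightarrow> real list" where
  "sorted_eigenvalues A = (THE l. length l = 3 \<and> sorted l \<and>
      (\<forall>x. det (x *\<^sub>R mat 1 - A) = prod_list (map (\<lambda>e. x - e) l)))"

definition ith_eigenvalue :: "real^3^3 \<Rightarrow> nat \<Rightarrow> real" where
  "ith_eigenvalue A i = sorted_eigenvalues A ! (i - 1)"

definition ith_eigenvalue_simple :: "real^3^3 \<Rightarrow> nat \<Rightarrow> bool" where
  "ith_eigenvalue_simple A i \<longleftrightarrow> count_list (sorted_eigenvalues A) (ith_eigenvalue A i) = 1"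

end

theory Submission
  imports Defs
begin

text \<open>
  The eigenvalues of a real symmetric 3x3 matrix are the real roots of its characteristic cubic;
  listed in increasing order they depend continuously on the matrix, since the graph of this map
  is closed and locally bounded. At a simple eigenvalue l of A, the adjugate of l I - A is a
  symmetric matrix of rank one whose trace, the derivative of the characteristic polynomial at l,
  does not vanish; divided by its trace it is the orthogonal projection u u^T onto the eigenline,
  and it depends continuously on A. Sending a unit vector u to u u^T is a double covering of its
  image, so over the simply connected plane the projections of H k lift to a continuous field of
  unit eigenvectors u. Two lifts that agree at one point agree everywhere: u(-k) and u(k) agree at
  k = 0, so u is even, and then u(k + d) and u(k) agree at k = -d/2, so u is periodic.
\<close>

definition principal_minors_sum :: "'a::comm_ring_1^3^3 \<Rightarrow> 'a" where
  "principal_minors_sum A = A$1$1 * A$2$2 - A$1$2 * A$2$1 + A$1$1 * A$3$3 - A$1$3 * A$3$1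
     + A$2$2 * A$3$3 - A$2$3 * A$3$2"

definition char_poly3 :: "'a::comm_ring_1^3^3 \<Rightarrow> 'a \<Rightarrow> 'a" where
  "char_poly3 A x = x^3 - trace A * x^2 + principal_minors_sum A * x - det A"

lemma trace_3: "trace (A::'a::comm_ring_1^3^3) = A$1$1 + A$2$2 + A$3$3"
  by (simp add: trace_def sum_3)

lemma scaleR_mat_1: "x *\<^sub>R mat 1 = mat x"
  by (simp add: vec_eq_iff mat_def)

lemma transpose_diff: "transpose (A - B) = transpose A - transpose B"
  by (simp add: vec_eq_iff transpose_def)

lemma det_mat_minus_eq_char_poly3: "det (mat x - A) = char_poly3 A x"
  by (simp add: char_poly3_def principal_minors_sum_def trace_3 det_3 mat_def algebra_simps
      power2_eq_square power3_eq_cube)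

definition succ3 :: "3 \<Rightarrow> 3" where
  "succ3 i = (if i = 1 then 2 else if i = 2 then 3 else 1)"

lemma succ3_simps [simp]: "succ3 1 = 2" "succ3 2 = 3" "succ3 3 = 1"
  by (simp_all add: succ3_def)

(* Cofactors with indices read cyclically modulo 3; the cyclic shift absorbs the signs. *)
definition adjugate3 :: "'a::comm_ring_1^3^3 \<Rightarrow> 'a^3^3" where
  "adjugate3 M = (\<chi> i j. M$(succ3 j)$(succ3 i) * M$(succ3 (succ3 j))$(succ3 (succ3 i))
                       - M$(succ3 j)$(succ3 (succ3 i)) * M$(succ3 (succ3 j))$(succ3 i))"

lemma matrix_mul_adjugate3: "M ** adjugate3 M = mat (det M)"
  by (simp add: vec_eq_iff forall_3 matrix_matrix_mult_def sum_3 adjugate3_def det_3 mat_def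
      algebra_simps)

lemma transpose_adjugate3: "transpose (adjugate3 M) = adjugate3 (transpose M)"
  by (simp add: vec_eq_iff forall_3 transpose_def adjugate3_def algebra_simps)

lemma adjugate3_adjugate3: "adjugate3 (adjugate3 M) = (\<chi> i j. det M * M $ i $ j)"
  by (simp add: vec_eq_iff forall_3 adjugate3_def det_3 algebra_simps)

(* The 2x2 minors of C are, up to sign, the entries of its adjugate. *)
lemma minors_eq_0_if_adjugate3_eq_0:
  fixes C :: "'a::comm_ring_1^3^3"
  assumes "adjugate3 C = 0"
  shows "C $ j $ m * C $ m $ l = C $ j $ l * C $ m $ m"
proof -
  have "\<forall>j m l. C $ j $ m * C $ m $ l = C $ j $ l * C $ m $ m"
    using assms unfolding forall_3 by (simp add: vec_eq_iff forall_3 adjugate3_def algebra_simps)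
  then show ?thesis by blast
qed

lemma trace_adjugate3_mat_minus:
  "trace (adjugate3 (mat x - A)) = 3 * x^2 - 2 * trace A * x + principal_minors_sum A"
  by (simp add: trace_3 principal_minors_sum_def adjugate3_def mat_def algebra_simps power2_eq_square)

lemma continuous_on_trace [continuous_intros]:
  "continuous_on S f \<Longrightarrow> continuous_on S (\<lambda>x. trace (f x :: real^'n^'n))"
  unfolding trace_def by (intro continuous_intros)

lemma continuous_on_mat [continuous_intros]:
  assumes "continuous_on S f"
  shows "continuous_on S (\<lambda>x. mat (f x) :: real^'n^'n)"
  using continuous_on_scaleR [OF assms continuous_on_const [of S "mat 1 :: real^'n^'n"]]
  by (simp add: scaleR_mat_1)

lemma continuous_on_adjugate3 [continuous_intros]:
  "continuous_on S f \<Longrightarrow> continuous_on S (\<lambda>x. adjugate3 (f x :: real^3^3))"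
  unfolding adjugate3_def by (intro continuous_intros)

section \<open>Real spectrum of a symmetric matrix\<close>

lemma det_symmetric_square_plus_mat_nonzero:
  fixes S :: "real^'n^'n"
  assumes sym: "transpose S = S" and b: "b \<noteq> 0"
  shows "det (S ** S + mat (b^2)) \<noteq> 0"
proof -
  let ?T = "S ** S + mat (b^2)"
  have "x = 0" if "?T *v x = 0" for x
  proof -
    have "mat (b^2) = b^2 *\<^sub>R (mat 1 :: real^'n^'n)"
      by (simp add: vec_eq_iff mat_def)
    then have "?T *v x = S *v (S *v x) + b^2 *\<^sub>R x"
      by (simp add: matrix_vector_mult_add_rdistrib matrix_vector_mul_assoc
          flip: scaleR_matrix_vector_assoc)
    moreover have "inner x (S *v (S *v x)) = inner (S *v x) (S *v x)"
      using dot_lmul_matrix[of x S "S *v x"] vector_transpose_matrix[of x S] sym by simp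
    ultimately have "inner (S *v x) (S *v x) + b^2 * inner x x = inner x (?T *v x)"
      by (simp add: inner_add_right)
    with that have "inner (S *v x) (S *v x) + b^2 * inner x x = 0"
      by simp
    then have "b^2 * inner x x = 0"
      by (simp add: add_nonneg_eq_0_iff)
    then show "x = 0"
      using b by simp
  qed
  then have "inj ((*v) ?T)"
    by (simp add: linear_injective_0)
  then show ?thesis
    using det_nz_iff_inj[of "(*v) ?T"] by simp
qed

lemma det_map_matrix_of_real: "det (map_matrix of_real A) = of_real (det A)"
  by (simp add: det_def)

lemma char_poly3_map_of_real:
  "char_poly3 (map_matrix of_real A) z
     = z^3 - of_real (trace A) * z^2 + of_real (principal_minors_sum A) * z - of_real (det A)"
  by (simp add: char_poly3_def trace_3 principal_minors_sum_def det_3)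

lemma char_poly3_symmetric_nonreal_root:
  fixes A :: "real^3^3"
  assumes sym: "transpose A = A" and b: "b \<noteq> 0"
  shows "char_poly3 (map_matrix of_real A) (Complex a b) \<noteq> 0"
proof -
  let ?z = "Complex a b" and ?A = "map_matrix complex_of_real A" and ?S = "A - mat a"
  have "(mat ?z - ?A) ** (mat (cnj ?z) - ?A) = map_matrix of_real (?S ** ?S + mat (b^2))"
    by (simp add: vec_eq_iff forall_3 matrix_matrix_mult_def sum_3 mat_def complex_eq_iff
        algebra_simps power2_eq_square)
  then have "char_poly3 ?A ?z * char_poly3 ?A (cnj ?z) = of_real (det (?S ** ?S + mat (b^2)))"
    by (simp add: det_mat_minus_eq_char_poly3 [symmetric] det_mul [symmetric] det_map_matrix_of_real)
  moreover have "transpose ?S = ?S"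
    using sym by (simp add: transpose_diff)
  ultimately show ?thesis
    using det_symmetric_square_plus_mat_nonzero b by fastforce
qed

lemma real_cubic_has_root: "\<exists>r::real. r^3 - p * r^2 + q * r - s = 0"
proof -
  let ?f = "\<lambda>x::real. x^3 - p * x^2 + q * x - s"
  define B where "B = 1 + \<bar>p\<bar> + \<bar>q\<bar> + \<bar>s\<bar>"
  have lower_order: "\<bar>p * x^2 - q * x + s\<bar> < \<bar>x\<bar>^3" if x: "\<bar>x\<bar> = B" for x
  proof -
    have "1 \<le> \<bar>x\<bar>"
      using x by (simp add: B_def)
    then have "\<bar>x\<bar> * 1 \<le> \<bar>x\<bar> * \<bar>x\<bar>"
      by (intro mult_left_mono) simp_all
    then have x_le: "\<bar>x\<bar> \<le> x^2"
      by (simp add: power2_eq_square)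
    have "\<bar>q\<bar> * \<bar>x\<bar> \<le> \<bar>q\<bar> * x^2"
      using x_le by (simp add: mult_left_mono)
    moreover have "\<bar>s\<bar> * 1 \<le> \<bar>s\<bar> * x^2"
      using x_le \<open>1 \<le> \<bar>x\<bar>\<close> by (intro mult_left_mono) simp_all
    moreover have "\<bar>p * x^2\<bar> = \<bar>p\<bar> * x^2" "\<bar>q * x\<bar> = \<bar>q\<bar> * \<bar>x\<bar>"
      by (simp_all add: abs_mult)
    ultimately have "\<bar>p * x^2 - q * x + s\<bar> \<le> (\<bar>p\<bar> + \<bar>q\<bar> + \<bar>s\<bar>) * x^2"
      by (simp add: distrib_right) linarith
    also have "\<dots> < B * x^2"
      using x_le \<open>1 \<le> \<bar>x\<bar>\<close> by (intro mult_strict_right_mono) (simp_all add: B_def)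
    also have "\<dots> = \<bar>x\<bar>^3"
      using x [symmetric] by (simp add: power2_eq_square power3_eq_cube)
    finally show ?thesis .
  qed
  have "B > 0"
    unfolding B_def by (simp add: add_pos_nonneg)
  then have "\<bar>p * B^2 - q * B + s\<bar> < B^3" "\<bar>p * B^2 + q * B + s\<bar> < B^3"
    using lower_order[of B] lower_order[of "- B"] by simp_all
  then have "?f (- B) < 0" "0 < ?f B"
    by (simp_all add: abs_less_iff)
  moreover have "continuous_on {- B..B} ?f"
    by (intro continuous_intros)
  ultimately show ?thesis
    using IVT'[of ?f "- B" 0 B] \<open>B > 0\<close> by force
qed

lemma real_cubic_splits:
  fixes p q s :: real
  assumes no_nonreal_root:
    "\<And>a b. b \<noteq> 0 \<Longrightarrow>
      (Complex a b)^3 - of_real p * (Complex a b)^2 + of_real q * Complex a b - of_real s \<noteq> 0"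
  shows "\<exists>r1 r2 r3. \<forall>x. x^3 - p * x^2 + q * x - s = (x - r1) * (x - r2) * (x - r3)"
proof -
  obtain r where r: "r^3 - p * r^2 + q * r - s = 0"
    using real_cubic_has_root by blast
  define \<beta> where "\<beta> = r - p"
  define \<gamma> where "\<gamma> = q + r * \<beta>"
  define D where "D = \<beta>^2 - 4 * \<gamma>"
  have s: "s = r^3 - p * r^2 + q * r"
    using r by simp
  have factor: "x^3 - p * x^2 + q * x - s = (x - r) * (x^2 + \<beta> * x + \<gamma>)" for x
    unfolding s \<beta>_def \<gamma>_def by (simp add: algebra_simps power2_eq_square power3_eq_cube)
  have complex_factor: "z^3 - of_real p * z^2 + of_real q * z - of_real s
      = (z - of_real r) * (z^2 + of_real \<beta> * z + of_real \<gamma>)" for z :: complex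
    unfolding s \<beta>_def \<gamma>_def by (simp add: algebra_simps power2_eq_square power3_eq_cube)
  show ?thesis
  proof (cases "D \<ge> 0")
    case True
    have "x^2 + \<beta> * x + \<gamma> = (x - (- \<beta> + sqrt D) / 2) * (x - (- \<beta> - sqrt D) / 2)" for x
      using True by (simp add: D_def field_simps power2_eq_square)
    with factor show ?thesis
      by (metis mult.assoc)
  next
    case False
    define z where "z = Complex (- \<beta> / 2) (sqrt (- D) / 2)"
    have "Im z \<noteq> 0"
      using False by (simp add: z_def)
    moreover have "z^2 + of_real \<beta> * z + of_real \<gamma> = 0"
      using False by (simp add: z_def complex_eq_iff power2_eq_square D_def field_simps)
    ultimately show ?thesis
      using no_nonreal_root[of "Im z" "Re z"] complex_factor[of z] by simp
  qed
qed

lemma cubic_coefficients: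
  fixes p q s a b c :: real
  assumes "\<And>x. x^3 - p * x^2 + q * x - s = (x - a) * (x - b) * (x - c)"
  shows "p = a + b + c" "q = a * b + a * c + b * c" "s = a * b * c"
proof -
  have "s = a * b * c"
    using assms[of 0] by simp
  moreover have "1 - p + q - s = (1 - a) * (1 - b) * (1 - c)"
    "- 1 - p - q - s = (- 1 - a) * (- 1 - b) * (- 1 - c)"
    using assms[of 1] assms[of "- 1"] by simp_all
  ultimately show "p = a + b + c" "q = a * b + a * c + b * c" "s = a * b * c"
    by (simp_all add: algebra_simps)
qed

lemma sorted_cubic_roots_unique:
  fixes a b c a' b' c' :: real
  assumes sorted: "a \<le> b" "b \<le> c" "a' \<le> b'" "b' \<le> c'"
    and eq: "\<And>x. (x - a) * (x - b) * (x - c) = (x - a') * (x - b') * (x - c')"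
  shows "a = a' \<and> b = b' \<and> c = c'"
proof -
  have "a' \<in> {a, b, c}" "a \<in> {a', b', c'}" "c' \<in> {a, b, c}" "c \<in> {a', b', c'}"
    using eq[of a'] eq[of a] eq[of c'] eq[of c] by auto
  then have "a = a'" "c = c'"
    using sorted by auto
  moreover have "a + b + c = a' + b' + c'"
    using cubic_coefficients(1)[of "a' + b' + c'" "a' * b' + a' * c' + b' * c'" "a' * b' * c'" a b c] eq
    by (simp add: algebra_simps power2_eq_square power3_eq_cube)
  ultimately show ?thesis
    by simp
qed

lemma sorted_eigenvalues_eqI:
  assumes sorted: "a \<le> b" "b \<le> c"
    and char_poly: "\<And>x. char_poly3 A x = (x - a) * (x - b) * (x - c)"
  shows "sorted_eigenvalues A = [a, b, c]"
  unfolding sorted_eigenvalues_def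
proof (rule the_equality)
  show "length [a, b, c] = 3 \<and> sorted [a, b, c]
      \<and> (\<forall>x. det (x *\<^sub>R mat 1 - A) = prod_list (map (\<lambda>e. x - e) [a, b, c]))"
    using sorted char_poly by (simp add: scaleR_mat_1 det_mat_minus_eq_char_poly3 mult.assoc)
next
  fix l :: "real list"
  assume l: "length l = 3 \<and> sorted l
    \<and> (\<forall>x. det (x *\<^sub>R mat 1 - A) = prod_list (map (\<lambda>e. x - e) l))"
  then obtain a' b' c' where l_eq: "l = [a', b', c']"
    by (auto simp: numeral_3_eq_3 length_Suc_conv)
  have "a' \<le> b'" "b' \<le> c'" "\<And>x. (x - a) * (x - b) * (x - c) = (x - a') * (x - b') * (x - c')"
    using l char_poly by (simp_all add: l_eq scaleR_mat_1 det_mat_minus_eq_char_poly3 mult.assoc)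
  then show "l = [a, b, c]"
    using sorted_cubic_roots_unique sorted l_eq by metis
qed

lemma symmetric_char_poly3_splits:
  fixes A :: "real^3^3"
  assumes "transpose A = A"
  obtains a b c where "a \<le> b" "b \<le> c" "\<And>x. char_poly3 A x = (x - a) * (x - b) * (x - c)"
proof -
  have "(Complex a b)^3 - of_real (trace A) * (Complex a b)^2
      + of_real (principal_minors_sum A) * Complex a b - of_real (det A) \<noteq> 0" if "b \<noteq> 0" for a b
    using char_poly3_symmetric_nonreal_root[OF assms that, of a] by (simp add: char_poly3_map_of_real)
  then obtain r1 r2 r3 where "\<forall>x. x^3 - trace A * x^2 + principal_minors_sum A * x - det A
      = (x - r1) * (x - r2) * (x - r3)"
    using real_cubic_splits by blast
  then have split: "\<And>x. char_poly3 A x = (x - r1) * (x - r2) * (x - r3)"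
    by (simp add: char_poly3_def)
  define l where "l = sort [r1, r2, r3]"
  have "length l = 3"
    by (simp add: l_def)
  then obtain a b c where l: "l = [a, b, c]"
    by (auto simp: numeral_3_eq_3 length_Suc_conv)
  have "sorted l"
    by (simp add: l_def)
  moreover have "prod_list (map (\<lambda>e. x - e) l) = prod_list (map (\<lambda>e. x - e) [r1, r2, r3])" for x
    unfolding l_def by (metis mset_map mset_sort prod_mset_prod_list)
  ultimately show thesis
    using that[of a b c] split by (simp add: l mult.assoc)
qed

lemma sorted_eigenvalues_symmetric:
  fixes A :: "real^3^3"
  assumes "transpose A = A"
  obtains a b c where "sorted_eigenvalues A = [a, b, c]" "a \<le> b" "b \<le> c"
    "\<And>x. char_poly3 A x = (x - a) * (x - b) * (x - c)"
proof -
  obtain a b c where "a \<le> b" "b \<le> c" "\<And>x. char_poly3 A x = (x - a) * (x - b) * (x - c)"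
    using symmetric_char_poly3_splits [OF assms] by metis
  then show thesis
    using that sorted_eigenvalues_eqI by blast
qed

lemma simple_ith_eigenvalue_factor:
  fixes A :: "real^3^3"
  assumes sym: "transpose A = A" and i: "i \<in> {1, 2, 3}" and simple: "ith_eigenvalue_simple A i"
  obtains b c where "b \<noteq> ith_eigenvalue A i" "c \<noteq> ith_eigenvalue A i"
    "\<And>x. char_poly3 A x = (x - ith_eigenvalue A i) * (x - b) * (x - c)"
proof -
  obtain a1 a2 a3 where eig: "sorted_eigenvalues A = [a1, a2, a3]"
    and factor: "\<And>x. char_poly3 A x = (x - a1) * (x - a2) * (x - a3)"
    using sorted_eigenvalues_symmetric [OF sym] by metis
  have count: "count_list [a1, a2, a3] (ith_eigenvalue A i) = 1"
    using simple eig by (simp add: ith_eigenvalue_simple_def)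
  consider "i = 1" | "i = 2" | "i = 3"
    using i by blast
  then show thesis
  proof cases
    case 1
    then show thesis
      using that[of a2 a3] count factor by (auto simp: ith_eigenvalue_def eig split: if_splits)
  next
    case 2
    then show thesis
      using that[of a1 a3] count factor by (auto simp: ith_eigenvalue_def eig split: if_splits)
  next
    case 3
    then show thesis
      using that[of a1 a2] count factor by (auto simp: ith_eigenvalue_def eig split: if_splits)
  qed
qed

section \<open>Continuity of the eigenvalues\<close>

definition eigenvalue_vector :: "real^3^3 \<Rightarrow> real^3" where
  "eigenvalue_vector A = vector (sorted_eigenvalues A)"

lemma eigenvalue_vector_eq_iff:
  fixes A :: "real^3^3"
  assumes "transpose A = A"
  shows "eigenvalue_vector A = r
    \<longleftrightarrow> r$1 \<le> r$2 \<and> r$2 \<le> r$3 \<and> (\<forall>x. char_poly3 A x = (x - r$1) * (x - r$2) * (x - r$3))"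
proof -
  obtain a b c where A: "sorted_eigenvalues A = [a, b, c]" "a \<le> b" "b \<le> c"
    "\<And>x. char_poly3 A x = (x - a) * (x - b) * (x - c)"
    using sorted_eigenvalues_symmetric [OF assms] by metis
  then have "eigenvalue_vector A = r \<longleftrightarrow> a = r$1 \<and> b = r$2 \<and> c = r$3"
    by (auto simp: eigenvalue_vector_def vec_eq_iff forall_3)
  then show ?thesis
    using A sorted_cubic_roots_unique[of a b c "r$1" "r$2" "r$3"] by auto
qed

lemma norm_eigenvalue_vector_sq:
  fixes A :: "real^3^3"
  assumes "transpose A = A"
  shows "(norm (eigenvalue_vector A))^2 = (trace A)^2 - 2 * principal_minors_sum A"
proof -
  let ?r = "eigenvalue_vector A"
  have "\<And>x. x^3 - trace A * x^2 + principal_minors_sum A * x - det A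
      = (x - ?r$1) * (x - ?r$2) * (x - ?r$3)"
    using eigenvalue_vector_eq_iff[OF assms, of ?r] by (simp add: char_poly3_def)
  moreover have "(norm ?r)^2 = (?r$1)^2 + (?r$2)^2 + (?r$3)^2"
    unfolding power2_norm_eq_inner by (simp add: inner_vec_def sum_3 power2_eq_square)
  ultimately show ?thesis
    using cubic_coefficients[of "trace A" "principal_minors_sum A" "det A" "?r$1" "?r$2" "?r$3"]
    by (simp add: algebra_simps power2_eq_square)
qed

lemma closed_symmetric_matrices: "closed {A :: real^'n^'n. transpose A = A}"
proof -
  have "{A :: real^'n^'n. transpose A = A} = {A. \<forall>i j. A $ j $ i = A $ i $ j}"
    by (auto simp: vec_eq_iff transpose_def)
  then show ?thesis
    by (simp only:) (intro closed_Collect_all closed_Collect_eq continuous_intros)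
qed

lemma bounded_eigenvalue_vector_image:
  assumes "compact K" and sym: "K \<subseteq> {A. transpose A = A}"
  shows "bounded (eigenvalue_vector ` K)"
proof -
  have "continuous_on K (\<lambda>A. (trace A)^2 - 2 * principal_minors_sum A)"
    unfolding trace_3 principal_minors_sum_def by (intro continuous_intros)
  then have "bounded ((\<lambda>A. (trace A)^2 - 2 * principal_minors_sum A) ` K)"
    using assms(1) by (simp add: compact_continuous_image compact_imp_bounded)
  then obtain R where R: "\<forall>y \<in> (\<lambda>A. (trace A)^2 - 2 * principal_minors_sum A) ` K. norm y \<le> R"
    unfolding bounded_iff by blast
  have "norm (eigenvalue_vector A) \<le> sqrt R" if "A \<in> K" for A
  proof (rule real_le_rsqrt)
    have "norm ((trace A)^2 - 2 * principal_minors_sum A) \<le> R"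
      using R that by blast
    then show "(norm (eigenvalue_vector A))^2 \<le> R"
      using that sym norm_eigenvalue_vector_sq[of A] by auto
  qed
  then show ?thesis
    unfolding bounded_iff by blast
qed

lemma closed_eigenvalue_vector_graph:
  assumes "closed K" and sym: "K \<subseteq> {A. transpose A = A}"
  shows "closed ((\<lambda>A. (A, eigenvalue_vector A)) ` K)"
proof -
  let ?roots = "{(A :: real^3^3, r :: real^3). r$1 \<le> r$2 \<and> r$2 \<le> r$3
      \<and> (\<forall>x. char_poly3 A x = (x - r$1) * (x - r$2) * (x - r$3))}"
  have "(\<lambda>A. (A, eigenvalue_vector A)) ` K = K \<times> UNIV \<inter> ?roots" (is "?G = _")
  proof
    show "?G \<subseteq> K \<times> UNIV \<inter> ?roots"
      using sym eigenvalue_vector_eq_iff by auto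
    show "K \<times> UNIV \<inter> ?roots \<subseteq> ?G"
    proof
      fix z
      assume z: "z \<in> K \<times> UNIV \<inter> ?roots"
      obtain A r where z_eq: "z = (A, r)"
        by fastforce
      have "A \<in> K" "eigenvalue_vector A = r"
        using z sym eigenvalue_vector_eq_iff by (auto simp: z_eq)
      then show "z \<in> ?G"
        by (auto simp: z_eq)
    qed
  qed
  moreover have "closed ?roots"
    unfolding char_poly3_def trace_3 principal_minors_sum_def det_3 case_prod_unfold
    by (intro closed_Collect_conj closed_Collect_le closed_Collect_all closed_Collect_eq
        continuous_intros)
  ultimately show ?thesis
    using \<open>closed K\<close> by (simp add: closed_Int closed_Times)
qed

lemma continuous_on_eigenvalue_vector: "continuous_on {A. transpose A = A} eigenvalue_vector"
proof -
  let ?S = "{A :: real^3^3. transpose A = A}"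
  have "continuous (at A0 within ?S) eigenvalue_vector" if "A0 \<in> ?S" for A0
  proof -
    let ?K = "?S \<inter> cball A0 1"
    have "compact ?K"
      by (intro closed_Int_compact closed_symmetric_matrices compact_cball)
    then obtain R where "\<forall>A \<in> ?K. norm (eigenvalue_vector A) \<le> R"
      using bounded_eigenvalue_vector_image[of ?K] by (auto simp: bounded_iff)
    then have "eigenvalue_vector \<in> ?K \<rightarrow> cball 0 R"
      by auto
    moreover have "closed ((\<lambda>A. (A, eigenvalue_vector A)) ` ?K)"
      using \<open>compact ?K\<close> by (intro closed_eigenvalue_vector_graph compact_imp_closed) auto
    ultimately have "continuous_on ?K eigenvalue_vector"
      using continuous_from_closed_graph[OF compact_cball] by blast
    moreover have "A0 \<in> ?K"
      using that by simp
    ultimately have "continuous (at A0 within ?K) eigenvalue_vector"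
      using continuous_on_eq_continuous_within by blast
    moreover have "at A0 within ?K = at A0 within ?S"
      by (rule at_within_nhd[of _ "ball A0 1"]) auto
    ultimately show ?thesis
      by simp
  qed
  then show ?thesis
    by (simp add: continuous_on_eq_continuous_within)
qed

lemma continuous_on_ith_eigenvalue:
  assumes "i \<in> {1, 2, 3}"
  shows "continuous_on {A. transpose A = A} (\<lambda>A. ith_eigenvalue A i)"
proof -
  have "eigenvalue_vector A $ of_nat i = ith_eigenvalue A i" if sym: "transpose A = A" for A
  proof -
    obtain a b c where "sorted_eigenvalues A = [a, b, c]"
      using sorted_eigenvalues_symmetric [OF sym] by metis
    then show ?thesis
      using assms by (auto simp: ith_eigenvalue_def eigenvalue_vector_def)
  qed
  moreover have "continuous_on {A. transpose A = A} (\<lambda>A. eigenvalue_vector A $ of_nat i)"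
    using continuous_on_eigenvalue_vector by (rule continuous_on_component)
  ultimately show ?thesis
    by (auto elim!: continuous_on_eq)
qed

section \<open>Unit vectors as a double cover of rank-one projections\<close>

definition outer_prod :: "real^'n \<Rightarrow> real^'n^'n" where
  "outer_prod v = (\<chi> i j. v$i * v$j)"

lemma outer_prod_mult_vec: "outer_prod u *v w = inner u w *\<^sub>R u"
  by (simp add: vec_eq_iff outer_prod_def matrix_vector_mult_def inner_vec_def sum_distrib_left
      mult.commute mult.left_commute)

lemma outer_prod_uminus [simp]: "outer_prod (- v) = outer_prod v"
  by (simp add: outer_prod_def)

lemma continuous_on_outer_prod [continuous_intros]:
  "continuous_on S f \<Longrightarrow> continuous_on S (\<lambda>x. outer_prod (f x))"
  unfolding outer_prod_def by (intro continuous_intros)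

lemma continuous_on_mult_vec_const [continuous_intros]:
  "continuous_on S f \<Longrightarrow> continuous_on S (\<lambda>x. (f x :: real^'n^'m) *v a)"
  unfolding matrix_vector_mult_def by (intro continuous_intros)

lemma openin_Collect_pos:
  fixes g :: "'a::topological_space \<Rightarrow> real"
  assumes "continuous_on UNIV g"
  shows "openin (top_of_set X) {x \<in> X. 0 < g x}"
proof -
  have "open {x. 0 < g x}"
    using assms by (intro open_Collect_less continuous_intros)
  moreover have "{x \<in> X. 0 < g x} = X \<inter> {x. 0 < g x}"
    by auto
  ultimately show ?thesis
    by (simp add: openin_open_Int)
qed

lemma eigenvector_if_outer_prod_eigen:
  assumes "norm v = 1" and "A ** outer_prod v = l *\<^sub>R outer_prod v"
  shows "A *v v = l *\<^sub>R v"
proof -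
  have v: "outer_prod v *v v = v"
    using assms(1) by (simp add: outer_prod_mult_vec norm_eq_1)
  have "A *v v = (A ** outer_prod v) *v v"
    by (metis v matrix_vector_mul_assoc)
  also have "\<dots> = l *\<^sub>R v"
    using assms(2) v by (simp flip: scaleR_matrix_vector_assoc)
  finally show ?thesis .
qed

lemma symmetric_rank_one_eq_outer_prod:
  fixes C :: "real^'n^'n"
  assumes sym: "transpose C = C"
    and minors: "\<And>j m l. C$j$m * C$m$l = C$j$l * C$m$m"
    and trace: "trace C \<noteq> 0"
  shows "inverse (trace C) *\<^sub>R C \<in> outer_prod ` sphere 0 1"
proof -
  define D where "D = inverse (trace C) *\<^sub>R C"
  have D_sym: "D$j$i = D$i$j" for i j
    using arg_cong [OF sym, of "\<lambda>M. M $ i $ j"] by (simp add: D_def transpose_def)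
  have D_minors: "D$j$m * D$m$l = D$j$l * D$m$m" for j m l
    using minors[of j m l] by (simp add: D_def)
  have "trace D = 1"
    using trace by (simp add: D_def trace_def flip: sum_distrib_left)
  have "\<exists>m. D$m$m > 0"
  proof (rule ccontr)
    assume "\<nexists>m. D$m$m > 0"
    then have "trace D \<le> 0"
      unfolding trace_def by (intro sum_nonpos) (simp add: not_less)
    with \<open>trace D = 1\<close> show False
      by simp
  qed
  then obtain m where m: "D$m$m > 0"
    by blast
  define v where "v = (\<chi> j. D$j$m / sqrt (D$m$m))"
  have vv: "v$i * v$j = D$i$j" for i j
  proof -
    have "v$i * v$j = D$i$m * D$m$j / D$m$m"
      using m D_sym[of m j] by (simp add: v_def)
    also have "\<dots> = D$i$j"
      using D_minors[of i m j] m by simp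
    finally show ?thesis .
  qed
  have "outer_prod v = D"
    by (simp add: vec_eq_iff outer_prod_def vv)
  moreover have "norm v = 1"
    using \<open>trace D = 1\<close> by (simp add: norm_eq_1 inner_vec_def trace_def vv power2_eq_square)
  ultimately show ?thesis
    unfolding D_def by (metis image_eqI mem_sphere_0)
qed

lemma homeomorphism_outer_prod_hemisphere:
  "homeomorphism {w \<in> sphere 0 1. 0 < inner w a} {Q \<in> outer_prod ` sphere 0 1. 0 < inner (Q *v a) a}
     outer_prod (\<lambda>Q. sgn (Q *v a))"
proof (rule homeomorphismI)
  let ?U = "{w \<in> sphere 0 1. 0 < inner w a}"
  let ?T = "{Q \<in> outer_prod ` sphere 0 1. 0 < inner (Q *v a) a}"
  have inverse: "sgn (outer_prod w *v a) = w" if "w \<in> ?U" for w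
    using that by (simp add: outer_prod_mult_vec sgn_scaleR sgn_div_norm)
  have T_eq: "?T = outer_prod ` ?U"
  proof
    show "?T \<subseteq> outer_prod ` ?U"
    proof
      fix Q assume Q: "Q \<in> ?T"
      then obtain w where w: "norm w = 1" "Q = outer_prod w"
        by auto
      then have "inner w a \<noteq> 0"
        using Q by (auto simp: outer_prod_mult_vec)
      then have "w \<in> ?U \<or> - w \<in> ?U"
        using w by auto
      moreover have "Q = outer_prod (- w)"
        using w by simp
      ultimately show "Q \<in> outer_prod ` ?U"
        using w by blast
    qed
    show "outer_prod ` ?U \<subseteq> ?T"
      by (auto simp: outer_prod_mult_vec)
  qed
  show "continuous_on ?U outer_prod"
    by (intro continuous_on_outer_prod continuous_on_id)
  show "continuous_on ?T (\<lambda>Q. sgn (Q *v a))"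
    by (intro continuous_intros) (auto simp: outer_prod_mult_vec)
  show "outer_prod ` ?U \<subseteq> ?T"
    using T_eq by simp
  show "(\<lambda>Q. sgn (Q *v a)) ` ?T \<subseteq> ?U"
    using T_eq inverse by auto
  show "\<And>w. w \<in> ?U \<Longrightarrow> sgn (outer_prod w *v a) = w"
    by (rule inverse)
  show "\<And>Q. Q \<in> ?T \<Longrightarrow> outer_prod (sgn (Q *v a)) = Q"
    using T_eq inverse by auto
qed

lemma covering_space_outer_prod:
  "covering_space (sphere 0 1) outer_prod (outer_prod ` sphere (0::real^'n) 1)"
proof
  show "continuous_on (sphere 0 1) outer_prod"
    by (intro continuous_on_outer_prod continuous_on_id)
  show "outer_prod ` sphere 0 1 = outer_prod ` sphere 0 1" ..
  fix Q0 assume "Q0 \<in> outer_prod ` sphere (0::real^'n) 1"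
  then obtain a :: "real^'n" where a: "norm a = 1" "Q0 = outer_prod a"
    by auto
  let ?T = "{Q \<in> outer_prod ` sphere 0 1. 0 < inner (Q *v a) a}"
  let ?U = "\<lambda>b. {w \<in> sphere 0 1. 0 < inner w b}"
  have "Q0 \<in> ?T"
    using a by (auto simp: outer_prod_mult_vec norm_eq_1)
  moreover have "openin (top_of_set (outer_prod ` sphere 0 1)) ?T"
    by (intro openin_Collect_pos continuous_intros)
  moreover have "\<Union>{?U a, ?U (- a)} = sphere 0 1 \<inter> outer_prod -` ?T"
    by (auto simp: outer_prod_mult_vec zero_less_mult_iff)
  moreover have "openin (top_of_set (sphere 0 1)) (?U b)" for b :: "real^'n"
    by (intro openin_Collect_pos continuous_intros)
  then have "\<forall>u \<in> {?U a, ?U (- a)}. openin (top_of_set (sphere 0 1)) u"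
    by blast
  moreover have "pairwise disjnt {?U a, ?U (- a)}"
    by (auto simp: pairwise_def disjnt_def)
  moreover have "homeomorphism (?U b) ?T outer_prod (\<lambda>Q. sgn (Q *v b))" if "b \<in> {a, - a}" for b
  proof -
    have "inner (Q *v b) b = inner (Q *v a) a" for Q
      using that by (auto simp: linear_neg [OF matrix_vector_mul_linear])
    then show ?thesis
      using homeomorphism_outer_prod_hemisphere[of b] by simp
  qed
  then have "\<forall>u \<in> {?U a, ?U (- a)}. \<exists>q. homeomorphism u ?T outer_prod q"
    by blast
  ultimately show "\<exists>T. Q0 \<in> T \<and> openin (top_of_set (outer_prod ` sphere 0 1)) T \<and>
      (\<exists>v. \<Union>v = sphere 0 1 \<inter> outer_prod -` T \<and> (\<forall>u\<in>v. openin (top_of_set (sphere 0 1)) u) \<and>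
        pairwise disjnt v \<and> (\<forall>u\<in>v. \<exists>q. homeomorphism u T outer_prod q))"
    by blast
qed

section \<open>Eigenprojection of a simple eigenvalue\<close>

lemma matrix_mul_adjugate3_root:
  fixes A :: "real^3^3"
  assumes "char_poly3 A l = 0"
  shows "A ** adjugate3 (mat l - A) = l *\<^sub>R adjugate3 (mat l - A)"
proof -
  let ?C = "adjugate3 (mat l - A)"
  have "(mat l - A) ** ?C = 0"
    using assms by (simp add: matrix_mul_adjugate3 det_mat_minus_eq_char_poly3)
  moreover have "(mat l - A) ** ?C = l *\<^sub>R ?C - A ** ?C"
    by (simp add: vec_eq_iff forall_3 matrix_matrix_mult_def sum_3 mat_def algebra_simps)
  ultimately show ?thesis
    by simp
qed

lemma trace_adjugate3_simple_root:
  fixes A :: "real^3^3"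
  assumes "\<And>x. char_poly3 A x = (x - l) * (x - b) * (x - c)"
  shows "trace (adjugate3 (mat l - A)) = (l - b) * (l - c)"
  using cubic_coefficients[of "trace A" "principal_minors_sum A" "det A" l b c] assms
  by (simp add: trace_adjugate3_mat_minus char_poly3_def algebra_simps power2_eq_square)

definition eigenprojection :: "real^3^3 \<Rightarrow> real \<Rightarrow> real^3^3" where
  "eigenprojection A l = inverse (trace (adjugate3 (mat l - A))) *\<^sub>R adjugate3 (mat l - A)"

lemma eigenprojection_simple_root:
  fixes A :: "real^3^3"
  assumes sym: "transpose A = A"
    and factor: "\<And>x. char_poly3 A x = (x - l) * (x - b) * (x - c)" and "b \<noteq> l" "c \<noteq> l"
  shows "trace (adjugate3 (mat l - A)) \<noteq> 0"
    and "A ** eigenprojection A l = l *\<^sub>R eigenprojection A l"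
    and "eigenprojection A l \<in> outer_prod ` sphere 0 1"
proof -
  let ?M = "mat l - A"
  show trace: "trace (adjugate3 ?M) \<noteq> 0"
    using trace_adjugate3_simple_root[OF factor] assms(3,4) by simp
  have "char_poly3 A l = 0"
    using factor by simp
  then show "A ** eigenprojection A l = l *\<^sub>R eigenprojection A l"
    by (simp add: eigenprojection_def matrix_scalar_ac matrix_mul_adjugate3_root
        flip: scalar_matrix_assoc)
  have "transpose ?M = ?M"
    using sym by (simp add: transpose_diff)
  then have "transpose (adjugate3 ?M) = adjugate3 ?M"
    by (simp add: transpose_adjugate3)
  moreover have "adjugate3 (adjugate3 ?M) = 0"
    using \<open>char_poly3 A l = 0\<close> by (simp add: adjugate3_adjugate3 det_mat_minus_eq_char_poly3 vec_eq_iff)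
  ultimately show "eigenprojection A l \<in> outer_prod ` sphere 0 1"
    unfolding eigenprojection_def
    using symmetric_rank_one_eq_outer_prod minors_eq_0_if_adjugate3_eq_0 trace by blast
qed

lemma continuous_on_eigenprojection:
  assumes "continuous_on S A" "continuous_on S l"
    and "\<And>k. k \<in> S \<Longrightarrow> trace (adjugate3 (mat (l k) - A k)) \<noteq> 0"
  shows "continuous_on S (\<lambda>k. eigenprojection (A k) (l k))"
proof -
  have adj: "continuous_on S (\<lambda>k. adjugate3 (mat (l k) - A k))"
    by (intro continuous_intros assms)
  show ?thesis
    unfolding eigenprojection_def using assms(3)
    by (intro continuous_on_scaleR continuous_on_inverse continuous_on_trace adj) auto
qed

section \<open>Lifting the eigenline\<close>

lemma outer_prod_lift:
  fixes Q :: "'a::real_normed_vector \<Rightarrow> real^'n^'n"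
  assumes "simply_connected S" "locally path_connected S"
    and "continuous_on S Q" "Q \<in> S \<rightarrow> outer_prod ` sphere 0 1"
  shows "\<exists>u. continuous_on S u \<and> (\<forall>k \<in> S. norm (u k) = 1 \<and> outer_prod (u k) = Q k)"
proof -
  obtain u where "continuous_on S u" "u \<in> S \<rightarrow> sphere 0 1" "\<And>k. k \<in> S \<Longrightarrow> outer_prod (u k) = Q k"
    using covering_space_lift [OF covering_space_outer_prod assms] by blast
  then show ?thesis
    by (auto intro!: exI [of _ u])
qed

lemma outer_prod_lift_unique:
  fixes u w :: "'a::topological_space \<Rightarrow> real^'n"
  assumes "connected S" "continuous_on S u" "continuous_on S w"
    and "\<And>k. k \<in> S \<Longrightarrow> norm (u k) = 1" "\<And>k. k \<in> S \<Longrightarrow> norm (w k) = 1"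
    and "\<And>k. k \<in> S \<Longrightarrow> outer_prod (u k) = outer_prod (w k)"
    and "a \<in> S" "u a = w a" "k \<in> S"
  shows "u k = w k"
  by (rule covering_space_lift_unique [OF covering_space_outer_prod, of u a w S "\<lambda>k. outer_prod (u k)"])
    (use assms in \<open>auto intro: continuous_on_outer_prod\<close>)

lemma zlattice_periodic_even_lift:
  fixes u :: "real^2 \<Rightarrow> real^'n"
  assumes cont: "continuous_on UNIV u" and norm: "\<And>k. norm (u k) = 1"
    and even: "\<And>k. outer_prod (u (- k)) = outer_prod (u k)"
    and per: "zlattice_periodic (\<lambda>k. outer_prod (u k))"
  shows "zlattice_periodic u"
  unfolding zlattice_periodic_def
proof (intro allI impI)
  fix k d :: "real^2"
  assume d: "\<forall>j. d $ j \<in> \<int>"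
  have reflect: "continuous_on UNIV (\<lambda>x. u (- x))"
    using continuous_on_compose2 [OF cont continuous_on_minus [OF continuous_on_id]] by simp
  have shift: "continuous_on UNIV (\<lambda>x. u (x + d))"
    using continuous_on_compose2 [OF cont continuous_on_add [OF continuous_on_id continuous_on_const]]
    by simp
  note lift_unique = outer_prod_lift_unique [OF connected_UNIV reflect cont]
    outer_prod_lift_unique [OF connected_UNIV shift cont]
  have u_even: "u (- x) = u x" for x
    using lift_unique(1)[of 0 x] norm even by simp
  have half: "- ((1/2) *\<^sub>R d) + d = (1/2) *\<^sub>R d"
    by (simp add: vec_eq_iff)
  have "u (- ((1/2) *\<^sub>R d) + d) = u (- ((1/2) *\<^sub>R d))"
    by (simp only: half u_even)
  moreover have "outer_prod (u (x + d)) = outer_prod (u x)" for x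
    using per d unfolding zlattice_periodic_def by blast
  ultimately show "u (k + d) = u k"
    using lift_unique(2)[of "- ((1/2) *\<^sub>R d)" k] norm by simp
qed

theorem mainTheorem3:
  fixes H :: "real^2 \<Rightarrow> real^3^3" and i :: nat
  assumes cont: "continuous_on UNIV H"
    and per: "zlattice_periodic H"
    and sym: "\<And>k. transpose (H k) = H k"
    and inv: "\<And>k. H (- k) = H k"
    and i: "i \<in> {1, 2, 3}"
    and simple: "\<And>k. ith_eigenvalue_simple (H k) i"
  shows "\<exists>u :: real^2 \<Rightarrow> real^3. continuous_on UNIV u \<and> zlattice_periodic u \<and>
           (\<forall>k. norm (u k) = 1 \<and> H k *v u k = ith_eigenvalue (H k) i *\<^sub>R u k)"
proof -
  define E where "E k = ith_eigenvalue (H k) i" for k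
  define Q where "Q k = eigenprojection (H k) (E k)" for k
  have "\<exists>b c. b \<noteq> E k \<and> c \<noteq> E k \<and> (\<forall>x. char_poly3 (H k) x = (x - E k) * (x - b) * (x - c))" for k
    using simple_ith_eigenvalue_factor[OF sym i simple] unfolding E_def by metis
  then have trace_nonzero: "trace (adjugate3 (mat (E k) - H k)) \<noteq> 0"
    and eigen: "H k ** Q k = E k *\<^sub>R Q k"
    and rank_one: "Q k \<in> outer_prod ` sphere 0 1" for k
    using eigenprojection_simple_root[OF sym] unfolding Q_def by metis+
  have "continuous_on UNIV E"
    unfolding E_def using sym
    by (intro continuous_on_compose2 [OF continuous_on_ith_eigenvalue [OF i] cont]) auto
  then have "continuous_on UNIV Q"
    unfolding Q_def using trace_nonzero by (intro continuous_on_eigenprojection cont)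
  moreover have "Q \<in> UNIV \<rightarrow> outer_prod ` sphere 0 1"
    using rank_one by blast
  ultimately obtain u where u: "continuous_on UNIV u" "\<And>k. norm (u k) = 1" "\<And>k. outer_prod (u k) = Q k"
    using outer_prod_lift [OF convex_imp_simply_connected [OF convex_UNIV] locally_path_connected_UNIV]
    by blast
  have "H k *v u k = E k *\<^sub>R u k" for k
    using eigenvector_if_outer_prod_eigen u(2,3) eigen by metis
  moreover have "zlattice_periodic u"
    using per inv u by (intro zlattice_periodic_even_lift) (auto simp: zlattice_periodic_def Q_def E_def)
  ultimately show ?thesis
    using u unfolding E_def by blast
qed

end
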